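(* If $G \le \mathrm{Sym}(\mathbb{N})$ is a maximal cofinitary group, then the natural action of $G$ on $\mathbb{N}$ (given by $g\cdot n = g(n)$) has only finitely many orbits.
   Context: $\mathrm{Sym}(\mathbb{N})$ is the group of bijections $\mathbb{N}\to\mathbb{N}$ under composition. A permutation is cofinitary if it is the identity or has only finitely many fixed points. A subgroup $G\le\mathrm{Sym}(\mathbb{N})$ is a cofinitary group if all its elements are cofinitary; it is a maximal cofinitary group if it is cofinitary and not properly contained in another cofinitary subgroup of $\mathrm{Sym}(\mathbb{N})$. *)

theory Defs
  imports Main
begin

definition SymN :: "(nat \<Rightarrow> nat) set" where
  "SymN = {f. bij f}"

definition subgroup_SymN :: "(nat \<Rightarrow> nat) set \<Rightarrow> bool" where
  "subgroup_SymN G \<longleftrightarrow> G \<subseteq> SymN \<and> id \<in> G \<and>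
     (\<forall>f\<in>G. \<forall>g\<in>G. f \<circ> g \<in> G) \<and> (\<forall>f\<in>G. inv f \<in> G)"

definition cofinitary :: "(nat \<Rightarrow> nat) \<Rightarrow> bool" where
  "cofinitary f \<longleftrightarrow> f = id \<or> finite {n. f n = n}"

definition cofinitary_group :: "(nat \<Rightarrow> nat) set \<Rightarrow> bool" where
  "cofinitary_group G \<longleftrightarrow> subgroup_SymN G \<and> (\<forall>f\<in>G. cofinitary f)"

definition maximal_cofinitary_group :: "(nat \<Rightarrow> nat) set \<Rightarrow> bool" where
  "maximal_cofinitary_group G \<longleftrightarrow> cofinitary_group G \<and>
     (\<forall>H. cofinitary_group H \<and> G \<subseteq> H \<longrightarrow> H = G)"

definition orbit :: "(nat \<Rightarrow> nat) set \<Rightarrow> nat \<Rightarrow> nat set" where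
  "orbit G n = {g n | g. g \<in> G}"

end

theory Submission
  imports Defs "HOL-Library.Countable_Set"
begin

(* Suppose the orbits are infinite in number and enumerate them by a surjective, G-invariant
   "level" function c : nat -> nat.  We build a bijection h (a "ladder") that moves every point
   to another level and such that each level has at most one descent.  This is done by a
   back-and-forth construction of finite partial ladders, always connecting a new point to a
   point of a fresh, strictly higher level.

   The group generated by G and h is then still cofinitary: each of its elements is a reduced
   word g_m h^(e_m) ... g_1 h^(e_1) g0, and following a point along such a word, the levels first
   strictly descend and then strictly ascend, so they can only come back to the start through a
   backtrack, which happens only at the finitely many fixed points of the letters g_i.  By
   maximality h would belong to G, contradicting that h changes orbits. *)

lemma subgroup_SymN_closed:
  assumes "subgroup_SymN G"
  shows "id \<in> G" and "f \<in> G \<Longrightarrow> g \<in> G \<Longrightarrow> f \<circ> g \<in> G"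
    and "f \<in> G \<Longrightarrow> inv f \<in> G" and "f \<in> G \<Longrightarrow> bij f"
  using assms unfolding subgroup_SymN_def SymN_def by blast+

lemma orbit_apply:
  assumes G: "subgroup_SymN G" and g: "g \<in> G"
  shows "orbit G (g x) = orbit G x"
proof
  show "orbit G (g x) \<subseteq> orbit G x"
    unfolding orbit_def using subgroup_SymN_closed(2)[OF G _ g] by (auto, metis comp_apply)
  show "orbit G x \<subseteq> orbit G (g x)"
  proof
    fix y assume "y \<in> orbit G x"
    then obtain k where k: "k \<in> G" "y = k x" unfolding orbit_def by blast
    have "inv g (g x) = x"
      using subgroup_SymN_closed(4)[OF G g] by (simp add: bij_is_inj)
    then have "y = (k \<circ> inv g) (g x)" using k by simp
    moreover have "k \<circ> inv g \<in> G"
      using subgroup_SymN_closed[OF G] k(1) g by blast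
    ultimately show "y \<in> orbit G (g x)" unfolding orbit_def by blast
  qed
qed

lemma orbit_enumeration:
  assumes G: "subgroup_SymN G" and inf: "infinite (orbit G ` UNIV)"
  obtains c :: "nat \<Rightarrow> nat" where "surj c" and "\<And>g x. g \<in> G \<Longrightarrow> c (g x) = c x"
proof
  define c where "c x = to_nat_on (orbit G ` UNIV) (orbit G x)" for x
  show "surj c"
  proof (rule surjI)
    fix k
    obtain Orb where "Orb \<in> orbit G ` UNIV" "to_nat_on (orbit G ` UNIV) Orb = k"
      using to_nat_on_surj[OF countableI_type[THEN countable_image] inf] by blast
    then show "c (SOME x. c x = k) = k"
      unfolding c_def by (metis (mono_tags, lifting) imageE someI)
  qed
  show "c (g x) = c x" if "g \<in> G" for g x
    unfolding c_def using orbit_apply[OF G that] by simp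
qed

definition hpm :: "(nat \<Rightarrow> nat) \<Rightarrow> bool \<Rightarrow> nat \<Rightarrow> nat" where
  "hpm h e = (if e then h else inv h)"

lemma hpm_bij: "bij h \<Longrightarrow> bij (hpm h e)"
  by (simp add: hpm_def bij_imp_bij_inv)

lemma hpm_cancel: "bij h \<Longrightarrow> hpm h (\<not> e) (hpm h e x) = x"
  by (auto simp: hpm_def bij_def inv_f_f surj_f_inv_f)

locale ladder =
  fixes c h :: "nat \<Rightarrow> nat"
  assumes bij_h: "bij h"
    and level_change: "\<And>x. c (h x) \<noteq> c x"
    and unique_descent: "\<And>p q e f. c p = c q \<Longrightarrow> c (hpm h e p) < c p \<Longrightarrow>
        c (hpm h f q) < c q \<Longrightarrow> p = q \<and> e = f"

lemma (in ladder) level_change_hpm: "c (hpm h e x) \<noteq> c x"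
proof (cases e)
  case False
  have "c (inv h x) \<noteq> c (h (inv h x))" using level_change by metis
  then show ?thesis using False bij_h by (simp add: hpm_def bij_is_surj surj_f_inv_f)
qed (simp add: hpm_def level_change)

lemma up_persists:
  fixes L :: "nat \<Rightarrow> 'a::linorder"
  assumes persist: "\<And>i. a < i \<Longrightarrow> i < b \<Longrightarrow> L (i - 1) < L i \<Longrightarrow> L i < L (Suc i)"
    and "a \<le> j" "j < b" "L j < L (Suc j)"
  shows "L j < L b \<and> L (b - 1) < L b"
proof -
  have "Suc j \<le> b" using assms by simp
  then show ?thesis
  proof (induction rule: dec_induct)
    case base then show ?case using assms(4) by simp
  next
    case (step n)
    then have "L n < L (Suc n)" using persist[of n] assms(2) by simp
    then show ?case using step.IH by (auto intro: less_trans)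
  qed
qed

lemma return_shape:
  fixes L :: "nat \<Rightarrow> 'a::linorder"
  assumes persist: "\<And>i. a < i \<Longrightarrow> i < b \<Longrightarrow> L (i - 1) < L i \<Longrightarrow> L i < L (Suc i)"
    and change: "\<And>i. a \<le> i \<Longrightarrow> i < b \<Longrightarrow> L (Suc i) \<noteq> L i"
    and "a < b" and return: "L b = L a"
  shows "L (Suc a) < L a \<and> L (b - 1) < L b"
proof
  show "L (Suc a) < L a"
    using up_persists[of a b L, OF persist, of a] change[of a] \<open>a < b\<close> return by force
  show "L (b - 1) < L b"
  proof (rule ccontr)
    assume no_final_ascent: "\<not> L (b - 1) < L b"
    have descent: "L (Suc i) < L i" if "a \<le> i" "i < b" for i
      using up_persists[of a b L, OF persist that] change[OF that] no_final_ascent by force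
    have "Suc a \<le> b" using \<open>a < b\<close> by simp
    then have "L b < L a"
    proof (induction rule: dec_induct)
      case base then show ?case using descent[of a] \<open>a < b\<close> by simp
    next
      case (step n) then show ?case using descent[of n] by simp
    qed
    then show False using return by simp
  qed
qed

text \<open>Walks considered below move from Y i by h^(E i) and then stay within the level (the orbit)
   to reach Y (Suc i); a backtrack at step Suc i means that this move came back to the very point
   reached by h^(E i) and the next letter is the inverse power of h.  Along a walk without
   backtracks an ascent is followed by an ascent: the point reached by the ascent has its unique
   descent pointing back, so descending again would reuse it, i.e.\ backtrack.\<close>
lemma (in ladder) walk_ascent_persists:
  fixes Y :: "nat \<Rightarrow> nat" and E :: "nat \<Rightarrow> bool"
  assumes step: "\<And>i. i < m \<Longrightarrow> c (Y (Suc i)) = c (hpm h (E i) (Y i))"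
    and no_backtrack: "\<And>i. Suc i < m \<Longrightarrow> Y (Suc i) = hpm h (E i) (Y i) \<Longrightarrow> E (Suc i) = E i"
    and "0 < i" "i < m" and ascent: "c (Y (i - 1)) < c (Y i)"
  shows "c (Y i) < c (Y (Suc i))"
proof (rule ccontr)
  assume "\<not> c (Y i) < c (Y (Suc i))"
  then have down: "c (hpm h (E i) (Y i)) < c (Y i)"
    using level_change_hpm step[OF \<open>i < m\<close>] by (metis linorder_neqE_nat)
  define j where "j = i - 1"
  have i: "i = Suc j" using \<open>0 < i\<close> j_def by simp
  define z where "z = hpm h (E j) (Y j)"
  have "c (hpm h (\<not> E j) z) < c z"
    using ascent step[of j] \<open>i < m\<close> hpm_cancel[OF bij_h] unfolding z_def i by simp
  moreover have "c (Y i) = c z" using step[of j] \<open>i < m\<close> unfolding z_def i by simp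
  ultimately have "Y i = z \<and> E i = (\<not> E j)" using unique_descent down by metis
  then show False using no_backtrack[of j] \<open>i < m\<close> unfolding z_def i by simp
qed

text \<open>By return_shape a return would start with a descent from Y a and end with an ascent into Y b;
   both use the unique descent of that level, so the inner walk from Y (Suc a) to Y (b - 1)
   returns as well, which is excluded by induction on the length.\<close>
lemma (in ladder) walk_no_return:
  fixes Y :: "nat \<Rightarrow> nat" and E :: "nat \<Rightarrow> bool"
  assumes step: "\<And>i. i < m \<Longrightarrow> c (Y (Suc i)) = c (hpm h (E i) (Y i))"
    and no_backtrack: "\<And>i. Suc i < m \<Longrightarrow> Y (Suc i) = hpm h (E i) (Y i) \<Longrightarrow> E (Suc i) = E i"
  shows "a < b \<Longrightarrow> b \<le> m \<Longrightarrow> c (Y b) \<noteq> c (Y a)"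
proof -
  define L where "L i = c (Y i)" for i
  have change: "L (Suc i) \<noteq> L i" if "i < m" for i
    using step[OF that] level_change_hpm unfolding L_def by simp
  have persist: "L i < L (Suc i)" if "0 < i" "i < m" "L (i - 1) < L i" for i
    using walk_ascent_persists[of m Y E i] step no_backtrack that unfolding L_def by blast
  show "a < b \<Longrightarrow> b \<le> m \<Longrightarrow> c (Y b) \<noteq> c (Y a)"
  proof (induction "b - a" arbitrary: a b rule: less_induct)
    case less
    show ?case
    proof
      assume return: "c (Y b) = c (Y a)"
      have shape: "L (Suc a) < L a \<and> L (b - 1) < L b"
      proof (rule return_shape[of a b L])
        show "L i < L (Suc i)" if "a < i" "i < b" "L (i - 1) < L i" for i
          using persist[of i] that less.prems by simp
        show "L (Suc i) \<noteq> L i" if "a \<le> i" "i < b" for i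
          using change[of i] that less.prems by simp
      qed (use less.prems return L_def in simp_all)
      define k where "k = b - 1"
      have b: "b = Suc k" and k: "k < m" using less.prems k_def by simp_all
      define z where "z = hpm h (E k) (Y k)"
      have cz: "c z = c (Y b)" using step[OF k] unfolding z_def b by simp
      have "c (hpm h (\<not> E k) z) < c z"
        using shape cz hpm_cancel[OF bij_h] unfolding z_def L_def k_def by simp
      moreover have "c (hpm h (E a) (Y a)) < c (Y a)"
        using shape step[of a] less.prems unfolding L_def by simp
      ultimately have same_descent: "Y a = z \<and> E a = (\<not> E k)"
        using unique_descent[of "Y a" z "E a" "\<not> E k"] return cz by simp
      then have meet: "hpm h (E a) (Y a) = Y k"
        using hpm_cancel[OF bij_h] unfolding z_def by auto
      have "b \<noteq> Suc a" using shape return unfolding L_def by auto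
      then consider "k = Suc a" | "Suc a < k" using less.prems b by linarith
      then show False
      proof cases
        case 1
        then show False using no_backtrack[of a] meet same_descent k by auto
      next
        case 2
        have "c (Y k) = c (Y (Suc a))" using step[of a] meet less.prems by simp
        then show False using less.hyps[of k "Suc a"] 2 b k by simp
      qed
    qed
  qed
qed

text \<open>Finite approximations of a ladder are sets of pairwise compatible edges (a, h a): edges
   change the level, form a partial bijection, and distinct edges have distinct top levels.\<close>
definition compatible :: "(nat \<Rightarrow> nat) \<Rightarrow> nat \<times> nat \<Rightarrow> nat \<times> nat \<Rightarrow> bool" where
  "compatible c p q \<longleftrightarrow> c (fst p) \<noteq> c (snd p) \<and> (fst p = fst q \<longleftrightarrow> snd p = snd q) \<and>
     (max (c (fst p)) (c (snd p)) = max (c (fst q)) (c (snd q)) \<longrightarrow> p = q)"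

definition partial_ladder :: "(nat \<Rightarrow> nat) \<Rightarrow> (nat \<times> nat) set \<Rightarrow> bool" where
  "partial_ladder c P \<longleftrightarrow> (\<forall>p\<in>P. \<forall>q\<in>P. compatible c p q)"

lemma compatible_swap: "compatible c (prod.swap p) (prod.swap q) \<longleftrightarrow> compatible c p q"
  unfolding compatible_def by (cases p, cases q) (auto simp: max.commute)

lemma partial_ladder_converse: "partial_ladder c (P\<inverse>) \<longleftrightarrow> partial_ladder c P"
proof -
  have "P\<inverse> = prod.swap ` P" by force
  then show ?thesis unfolding partial_ladder_def by (simp add: compatible_swap)
qed

lemma partial_ladder_chain:
  fixes S :: "nat \<Rightarrow> (nat \<times> nat) set"
  assumes mono: "\<And>t s. t \<le> s \<Longrightarrow> S t \<subseteq> S s" and "\<And>t. partial_ladder c (S t)"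
  shows "partial_ladder c (\<Union>t. S t)"
  unfolding partial_ladder_def
proof (intro ballI)
  fix p q assume "p \<in> (\<Union>t. S t)" "q \<in> (\<Union>t. S t)"
  then obtain t s where "p \<in> S t" "q \<in> S s" by blast
  moreover have "S t \<subseteq> S (max t s)" "S s \<subseteq> S (max t s)" by (simp_all add: mono)
  ultimately have "p \<in> S (max t s)" "q \<in> S (max t s)" by blast+
  then show "compatible c p q" using assms(2) unfolding partial_ladder_def by blast
qed

definition fresh :: "(nat \<Rightarrow> nat) \<Rightarrow> (nat \<times> nat) set \<Rightarrow> nat \<Rightarrow> nat" where
  "fresh c P a = (SOME b. c b = Suc (Max (insert (c a) (c ` Field P))))"

lemma fresh_above:
  assumes "surj c" "finite P"
  shows "c a < c (fresh c P a)" and "x \<in> Field P \<Longrightarrow> c x < c (fresh c P a)"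
proof -
  have "c (fresh c P a) = Suc (Max (insert (c a) (c ` Field P)))"
    unfolding fresh_def by (rule someI_ex) (use assms(1) in \<open>metis surj_def\<close>)
  moreover have "finite (insert (c a) (c ` Field P))" using assms(2) by (simp add: finite_Field)
  ultimately show "c a < c (fresh c P a)" and "x \<in> Field P \<Longrightarrow> c x < c (fresh c P a)"
    by (simp_all add: less_Suc_eq_le)
qed

definition extend :: "(nat \<Rightarrow> nat) \<Rightarrow> (nat \<times> nat) set \<Rightarrow> nat \<Rightarrow> (nat \<times> nat) set" where
  "extend c P a = (if a \<in> Domain P then P else insert (a, fresh c P a) P)"

lemma extend_basic: "P \<subseteq> extend c P a" "a \<in> Domain (extend c P a)" "finite P \<Longrightarrow> finite (extend c P a)"
  unfolding extend_def by auto

text \<open>The new edge goes to a strictly higher level than everything seen so far, so it is compatible.\<close>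
lemma extend_partial_ladder:
  assumes "surj c" "finite P" "partial_ladder c P"
  shows "partial_ladder c (extend c P a)"
proof (cases "a \<in> Domain P")
  case False
  define b where "b = fresh c P a"
  have ab: "c a < c b" using fresh_above(1)[OF assms(1,2)] b_def by simp
  have old: "c x < c b" "c y < c b" if "(x, y) \<in> P" for x y
    using fresh_above(2)[OF assms(1,2)] that unfolding b_def by (auto intro: FieldI1 FieldI2)
  have "compatible c (a, b) q \<and> compatible c q (a, b)" if "q \<in> P" for q
  proof -
    obtain x y where q: "q = (x, y)" by fastforce
    have "c x \<noteq> c y" using assms(3) that q unfolding partial_ladder_def compatible_def by fastforce
    moreover have "a \<noteq> x" using False that q by auto
    moreover have "b \<noteq> y" "max (c x) (c y) < c b" using old that q by auto
    ultimately show ?thesis using ab q unfolding compatible_def by auto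
  qed
  moreover have "compatible c (a, b) (a, b)" using ab unfolding compatible_def by simp
  ultimately show ?thesis
    using assms(3) False unfolding extend_def partial_ladder_def b_def by auto
qed (simp add: extend_def assms)

text \<open>Back-and-forth construction: at even steps put the next point into the domain, at odd
   steps (working with the converse relation) into the range.\<close>
fun stage :: "(nat \<Rightarrow> nat) \<Rightarrow> nat \<Rightarrow> (nat \<times> nat) set" where
  "stage c 0 = {}"
| "stage c (Suc t) = (if even t then extend c (stage c t) (t div 2)
                      else (extend c ((stage c t)\<inverse>) (t div 2))\<inverse>)"

lemma stage_partial_ladder: "surj c \<Longrightarrow> finite (stage c t) \<and> partial_ladder c (stage c t)"
proof (induction t)
  case 0 then show ?case by (simp add: partial_ladder_def)
next
  case (Suc t)
  then show ?case
    using extend_partial_ladder[of c] extend_basic(3) partial_ladder_converse by auto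
qed

lemma stage_mono: "t \<le> s \<Longrightarrow> stage c t \<subseteq> stage c s"
proof (induction rule: dec_induct)
  case (step n)
  have "(stage c n)\<inverse> \<subseteq> extend c ((stage c n)\<inverse>) (n div 2)" by (rule extend_basic(1))
  then have "stage c n \<subseteq> (extend c ((stage c n)\<inverse>) (n div 2))\<inverse>"
    by (simp only: converse_subset_swap)
  then have "stage c n \<subseteq> stage c (Suc n)" using extend_basic(1) by simp
  then show ?case using step.IH by simp
qed simp

lemma stage_total: "n \<in> Domain (stage c (Suc (2 * n)))" "n \<in> Range (stage c (Suc (Suc (2 * n))))"
  using extend_basic(2)[of n c "stage c (2 * n)"] extend_basic(2)[of n c "(stage c (Suc (2 * n)))\<inverse>"]
  by auto

text \<open>A partial ladder whose domain and range are everything is the graph of a ladder: a descent of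
   p along h^e is the edge of R with top level c p, which the compatibility condition makes unique.\<close>
lemma ladder_from_relation:
  assumes R: "partial_ladder c R" and dom: "Domain R = UNIV" and ran: "Range R = UNIV"
  obtains h where "ladder c h"
proof
  define h where "h x = (THE y. (x, y) \<in> R)" for x
  have functional: "y = y'" if "(x, y) \<in> R" "(x, y') \<in> R" for x y y'
    using R that unfolding partial_ladder_def compatible_def by fastforce
  have graph: "(x, y) \<in> R \<longleftrightarrow> y = h x" for x y
  proof -
    obtain y0 where y0: "(x, y0) \<in> R" using dom by blast
    have "(x, h x) \<in> R" unfolding h_def by (rule theI[of _ y0]) (use y0 functional in blast)+
    then show ?thesis using functional by blast
  qed
  have "inj h"
  proof (rule injI)
    fix x x' assume "h x = h x'"
    then have "(x, h x) \<in> R" "(x', h x) \<in> R" using graph by auto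
    then show "x = x'" using R unfolding partial_ladder_def compatible_def by fastforce
  qed
  moreover have "surj h" using ran graph by blast
  ultimately have bij: "bij h" by (simp add: bij_def)
  have hinv: "h (inv h p) = p" for p using \<open>surj h\<close> by (simp add: surj_f_inv_f)
  \<comment> \<open>A descent from p along h^e is witnessed by an edge of R whose higher end is p.\<close>
  define edge where "edge e p = (if e then (p, h p) else (inv h p, p))" for e p
  have edge: "edge e p \<in> R \<and> max (c (fst (edge e p))) (c (snd (edge e p))) = c p"
    if "c (hpm h e p) < c p" for e p
    using that graph hinv unfolding edge_def hpm_def by auto
  show "ladder c h"
  proof
    show "bij h" by (fact bij)
    show "c (h x) \<noteq> c x" for x
      using R graph[of x "h x"] unfolding partial_ladder_def compatible_def by fastforce
    show "p = q \<and> e = f"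
      if levels: "c p = c q" "c (hpm h e p) < c p" "c (hpm h f q) < c q" for p q e f
    proof -
      have "compatible c (edge e p) (edge f q)"
        using R edge levels(2,3) unfolding partial_ladder_def by blast
      then have "edge e p = edge f q"
        using edge levels unfolding compatible_def by simp
      then show ?thesis
        using levels hinv unfolding edge_def hpm_def by (auto split: if_splits)
    qed
  qed
qed

lemma ladder_exists:
  assumes "surj c"
  obtains h where "ladder c h"
proof (rule ladder_from_relation)
  show "partial_ladder c (\<Union>t. stage c t)"
    using stage_mono stage_partial_ladder[OF assms] by (intro partial_ladder_chain) auto
  have "stage c t \<subseteq> (\<Union>t. stage c t)" for t by blast
  then have "n \<in> Domain (\<Union>t. stage c t)" "n \<in> Range (\<Union>t. stage c t)" for n
    using stage_total[of n c] Domain_mono Range_mono by blast+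
  then show "Domain (\<Union>t. stage c t) = UNIV" "Range (\<Union>t. stage c t) = UNIV" by blast+
qed (rule that)

text \<open>A word is a list of letters (e_i, g_i) with g_i in G; eval_word h g0 s is the permutation
   g_m h^(e_m) ... g_1 h^(e_1) g0, with the head of the list applied first.\<close>
fun eval_word :: "(nat \<Rightarrow> nat) \<Rightarrow> (nat \<Rightarrow> nat) \<Rightarrow> (bool \<times> (nat \<Rightarrow> nat)) list \<Rightarrow> nat \<Rightarrow> nat" where
  "eval_word h g0 [] = g0"
| "eval_word h g0 ((e, g) # s) = eval_word h (g \<circ> hpm h e \<circ> g0) s"

lemma eval_word_snoc: "eval_word h g0 (s @ [(e, g)]) = g \<circ> hpm h e \<circ> eval_word h g0 s"
  by (induction s arbitrary: g0) auto

lemma eval_word_take_Suc: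
  "i < length s \<Longrightarrow>
   eval_word h g0 (take (Suc i) s) = snd (s ! i) \<circ> hpm h (fst (s ! i)) \<circ> eval_word h g0 (take i s)"
  by (cases "s ! i") (simp add: take_Suc_conv_app_nth eval_word_snoc)

lemma eval_word_base_comp: "eval_word h (g0 \<circ> a) s = eval_word h g0 s \<circ> a"
proof (induction s arbitrary: g0)
  case (Cons p s)
  obtain e g where p: "p = (e, g)" by fastforce
  have "eval_word h (g0 \<circ> a) (p # s) = eval_word h ((g \<circ> hpm h e \<circ> g0) \<circ> a) s"
    by (simp only: p eval_word.simps o_assoc)
  also have "\<dots> = eval_word h g0 (p # s) \<circ> a"
    by (simp only: Cons.IH p eval_word.simps)
  finally show ?case .
qed simp

lemma eval_word_bij:
  assumes "bij h"
  shows "bij g0 \<Longrightarrow> \<forall>p\<in>set s. bij (snd p) \<Longrightarrow> bij (eval_word h g0 s)"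
proof (induction s arbitrary: g0)
  case (Cons p s)
  obtain e g where p: "p = (e, g)" by fastforce
  have "bij (g \<circ> hpm h e \<circ> g0)"
    using Cons.prems p hpm_bij[OF assms] by (auto intro: bij_comp)
  then show ?case using Cons p by simp
qed simp

text \<open>A word is reduced if no group element between two opposite powers of h is the identity,
   so that no cancellation h^e h^(-e) is visible.\<close>
definition reduced :: "(bool \<times> (nat \<Rightarrow> nat)) list \<Rightarrow> bool" where
  "reduced s \<longleftrightarrow> (\<forall>j. Suc j < length s \<longrightarrow> fst (s ! Suc j) = (\<not> fst (s ! j)) \<longrightarrow> snd (s ! j) \<noteq> id)"

lemma reduced_tail: "reduced (p # s) \<Longrightarrow> reduced s"
  unfolding reduced_def by (metis Suc_less_eq length_Cons nth_Cons_Suc)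

lemma reduced_Cons:
  assumes "reduced s" and "s \<noteq> [] \<Longrightarrow> fst (hd s) = (\<not> e) \<Longrightarrow> g \<noteq> id"
  shows "reduced ((e, g) # s)"
  unfolding reduced_def
proof (intro allI impI)
  fix j assume "Suc j < length ((e, g) # s)" "fst (((e, g) # s) ! Suc j) = (\<not> fst (((e, g) # s) ! j))"
  then show "snd (((e, g) # s) ! j) \<noteq> id"
    using assms unfolding reduced_def by (cases j) (auto simp: hd_conv_nth)
qed

definition reduced_rep :: "(nat \<Rightarrow> nat) set \<Rightarrow> (nat \<Rightarrow> nat) \<Rightarrow> (nat \<Rightarrow> nat) \<Rightarrow> bool" where
  "reduced_rep G h f \<longleftrightarrow>
     (\<exists>g0 s. g0 \<in> G \<and> (\<forall>p\<in>set s. snd p \<in> G) \<and> reduced s \<and> f = eval_word h g0 s)"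

lemma reduced_rep_comp_G:
  assumes G: "subgroup_SymN G" and "reduced_rep G h f" "a \<in> G"
  shows "reduced_rep G h (f \<circ> a)"
  using assms subgroup_SymN_closed(2)[OF G] unfolding reduced_rep_def
  by (metis eval_word_base_comp)

lemma reduced_rep_comp_hpm:
  assumes G: "subgroup_SymN G" and bh: "bij h" and "reduced_rep G h f"
  shows "reduced_rep G h (f \<circ> hpm h e)"
proof -
  obtain g0 s where rep: "g0 \<in> G" "\<forall>p\<in>set s. snd p \<in> G" "reduced s" "f = eval_word h g0 s"
    using assms(3) unfolding reduced_rep_def by blast
  show ?thesis
  proof (cases "g0 = id \<and> s \<noteq> [] \<and> fst (hd s) = (\<not> e)")
    case True
    then obtain g1 s' where s: "s = (\<not> e, g1) # s'" by (cases s) auto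
    have "f \<circ> hpm h e = eval_word h (g1 \<circ> hpm h (\<not> e) \<circ> hpm h e) s'"
      using rep(4) True s by (simp add: eval_word_base_comp comp_assoc)
    also have "g1 \<circ> hpm h (\<not> e) \<circ> hpm h e = g1"
      using hpm_cancel[OF bh] by (simp add: fun_eq_iff)
    finally have cancel: "f \<circ> hpm h e = eval_word h g1 s'" .
    have "g1 \<in> G" "\<forall>p\<in>set s'. snd p \<in> G" "reduced s'"
      using rep(2,3) s reduced_tail by auto
    then show ?thesis unfolding reduced_rep_def using cancel by blast
  next
    case False
    have "f \<circ> hpm h e = eval_word h id ((e, g0) # s)"
      using rep(4) by (simp add: eval_word_base_comp)
    moreover have "reduced ((e, g0) # s)" using False rep(3) by (intro reduced_Cons) auto
    moreover have "\<forall>p\<in>set ((e, g0) # s). snd p \<in> G" using rep(1,2) by simp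
    ultimately show ?thesis
      using subgroup_SymN_closed(1)[OF G] unfolding reduced_rep_def by blast
  qed
qed

inductive_set adjoin :: "(nat \<Rightarrow> nat) set \<Rightarrow> (nat \<Rightarrow> nat) \<Rightarrow> (nat \<Rightarrow> nat) set" for G h where
  adjoin_id: "id \<in> adjoin G h"
| adjoin_step: "f \<in> adjoin G h \<Longrightarrow> a \<in> G \<union> {h, inv h} \<Longrightarrow> f \<circ> a \<in> adjoin G h"

lemma adjoin_generator: "a \<in> G \<union> {h, inv h} \<Longrightarrow> a \<in> adjoin G h"
  using adjoin_step[OF adjoin_id] by fastforce

lemma adjoin_comp:
  assumes "f \<in> adjoin G h" "k \<in> adjoin G h"
  shows "f \<circ> k \<in> adjoin G h"
  using assms(2)
proof (induction k rule: adjoin.induct)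
  case (adjoin_step k a) then show ?case by (metis adjoin.adjoin_step comp_assoc)
qed (simp add: assms(1))

lemma generator_bij:
  "subgroup_SymN G \<Longrightarrow> bij h \<Longrightarrow> a \<in> G \<union> {h, inv h} \<Longrightarrow> bij a"
  using subgroup_SymN_closed(4) bij_imp_bij_inv by blast

lemma adjoin_bij:
  assumes "subgroup_SymN G" "bij h"
  shows "f \<in> adjoin G h \<Longrightarrow> bij f"
proof (induction f rule: adjoin.induct)
  case (adjoin_step f a) then show ?case using bij_comp generator_bij[OF assms] by blast
qed (rule bij_id)

lemma adjoin_inv:
  assumes G: "subgroup_SymN G" and bh: "bij h"
  shows "f \<in> adjoin G h \<Longrightarrow> inv f \<in> adjoin G h"
proof (induction f rule: adjoin.induct)
  case adjoin_id then show ?case by (metis inv_id adjoin.adjoin_id)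
next
  case (adjoin_step f a)
  have "inv a \<in> G \<union> {h, inv h}"
    using adjoin_step.hyps(2) subgroup_SymN_closed(3)[OF G] inv_inv_eq[OF bh] by auto
  moreover have "inv (f \<circ> a) = inv a \<circ> inv f"
    using o_inv_distrib adjoin_bij[OF G bh adjoin_step.hyps(1)] generator_bij[OF G bh adjoin_step.hyps(2)]
    by blast
  ultimately show ?case using adjoin_comp adjoin_generator adjoin_step.IH by metis
qed

lemma adjoin_subgroup:
  assumes "subgroup_SymN G" "bij h"
  shows "subgroup_SymN (adjoin G h)"
  unfolding subgroup_SymN_def SymN_def
  using adjoin_bij[OF assms] adjoin_id adjoin_comp adjoin_inv[OF assms] by blast

lemma adjoin_reduced_rep:
  assumes G: "subgroup_SymN G" and bh: "bij h"
  shows "f \<in> adjoin G h \<Longrightarrow> reduced_rep G h f"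
proof (induction f rule: adjoin.induct)
  case adjoin_id
  show ?case unfolding reduced_rep_def using subgroup_SymN_closed(1)[OF G]
    by (intro exI[of _ id] exI[of _ "[]"]) (simp add: reduced_def)
next
  case (adjoin_step f a)
  then consider "a \<in> G" | "a = hpm h True" | "a = hpm h False" by (auto simp: hpm_def)
  then show ?case
  proof cases
    case 1 then show ?thesis using reduced_rep_comp_G[OF G adjoin_step.IH] by blast
  qed (use reduced_rep_comp_hpm[OF G bh adjoin_step.IH] in blast)+
qed

text \<open>The points x which, followed along the word, backtrack at letter i: the letter g_i
   (which is not the identity) fixes the point reached by h^(e_i).\<close>
definition backtracks :: "(nat \<Rightarrow> nat) \<Rightarrow> (nat \<Rightarrow> nat) \<Rightarrow> (bool \<times> (nat \<Rightarrow> nat)) list \<Rightarrow> nat set" where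
  "backtracks h g0 s = (\<Union>i\<in>{i. Suc i < length s \<and> snd (s ! i) \<noteq> id}.
     (hpm h (fst (s ! i)) \<circ> eval_word h g0 (take i s)) -` {y. snd (s ! i) y = y})"

text \<open>Over a cofinitary group there are only finitely many backtracking points, since each is
   the preimage of the finite fixed point set of a non-identity letter under a bijection.\<close>
lemma backtracks_finite:
  assumes cof: "\<forall>g\<in>G. cofinitary g" and G: "subgroup_SymN G" and "bij h"
    and word: "g0 \<in> G" "\<forall>p\<in>set s. snd p \<in> G"
  shows "finite (backtracks h g0 s)"
  unfolding backtracks_def
proof (intro finite_UN_I)
  fix i assume i: "i \<in> {i. Suc i < length s \<and> snd (s ! i) \<noteq> id}"
  then have "cofinitary (snd (s ! i))" using word(2) cof by simp
  then have "finite {y. snd (s ! i) y = y}" using i unfolding cofinitary_def by simp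
  moreover have "bij (eval_word h g0 (take i s))"
    using word subgroup_SymN_closed(4)[OF G]
    by (intro eval_word_bij[OF \<open>bij h\<close>]) (auto dest: in_set_takeD)
  then have "bij (hpm h (fst (s ! i)) \<circ> eval_word h g0 (take i s))"
    using hpm_bij[OF \<open>bij h\<close>] by (rule bij_comp)
  ultimately show "finite ((hpm h (fst (s ! i)) \<circ> eval_word h g0 (take i s)) -` {y. snd (s ! i) y = y})"
    using finite_vimageI bij_is_inj by blast
qed (rule finite_subset[of _ "{..<length s}"], auto)

text \<open>A fixed point of a nonempty reduced word must backtrack: otherwise the walk of its
   images along the prefixes of the word would return to its starting orbit, contradicting
   walk_no_return.\<close>
lemma (in ladder) fixed_point_backtracks:
  assumes invariant: "\<And>g x. g \<in> G \<Longrightarrow> c (g x) = c x"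
    and word: "g0 \<in> G" "\<forall>p\<in>set s. snd p \<in> G" "reduced s" "s \<noteq> []"
    and fixed: "eval_word h g0 s x = x"
  shows "x \<in> backtracks h g0 s"
proof (rule ccontr)
  assume good: "x \<notin> backtracks h g0 s"
  define m where "m = length s"
  define E where "E i = fst (s ! i)" for i
  define Y where "Y i = eval_word h g0 (take i s) x" for i
  have Y_step: "Y (Suc i) = snd (s ! i) (hpm h (E i) (Y i))" if "i < m" for i
    using eval_word_take_Suc[of i s h g0] that unfolding Y_def E_def m_def by simp
  have step: "c (Y (Suc i)) = c (hpm h (E i) (Y i))" if "i < m" for i
    using Y_step[OF that] invariant word(2) that m_def by simp
  have no_backtrack: "E (Suc i) = E i" if "Suc i < m" "Y (Suc i) = hpm h (E i) (Y i)" for i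
  proof (rule ccontr)
    assume "E (Suc i) \<noteq> E i"
    then have "fst (s ! Suc i) = (\<not> fst (s ! i))" unfolding E_def by blast
    then have "snd (s ! i) \<noteq> id" using word(3) that(1) unfolding reduced_def m_def by blast
    moreover have "snd (s ! i) (hpm h (E i) (Y i)) = Y (Suc i)"
      using that(1) by (intro Y_step[symmetric]) simp
    then have "snd (s ! i) (hpm h (E i) (Y i)) = hpm h (E i) (Y i)"
      by (simp only: that(2))
    ultimately show False
      using good that(1) unfolding backtracks_def Y_def E_def m_def by auto
  qed
  have "c (Y m) \<noteq> c (Y 0)"
    using walk_no_return[of m Y E 0 m] step no_backtrack word(4) m_def by simp
  moreover have "Y m = x" "Y 0 = g0 x" using fixed unfolding Y_def m_def by simp_all
  ultimately show False using invariant[OF word(1)] by simp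
qed

lemma (in ladder) reduced_word_cofinitary:
  assumes cof: "\<forall>g\<in>G. cofinitary g" and G: "subgroup_SymN G"
    and invariant: "\<And>g x. g \<in> G \<Longrightarrow> c (g x) = c x"
    and word: "g0 \<in> G" "\<forall>p\<in>set s. snd p \<in> G" "reduced s"
  shows "cofinitary (eval_word h g0 s)"
proof (cases "s = []")
  case True then show ?thesis using word(1) cof by simp
next
  case False
  then have "{x. eval_word h g0 s x = x} \<subseteq> backtracks h g0 s"
    using fixed_point_backtracks[of G g0 s] invariant word by blast
  moreover have "finite (backtracks h g0 s)" by (rule backtracks_finite[OF cof G bij_h word(1,2)])
  ultimately show ?thesis unfolding cofinitary_def by (meson finite_subset)
qed

lemma adjoin_cofinitary_group:
  assumes G: "cofinitary_group G" and "ladder c h"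
    and invariant: "\<And>g x. g \<in> G \<Longrightarrow> c (g x) = c x"
  shows "cofinitary_group (adjoin G h)"
proof -
  have sub: "subgroup_SymN G" and cof: "\<forall>g\<in>G. cofinitary g"
    using G unfolding cofinitary_group_def by blast+
  interpret ladder c h by (fact \<open>ladder c h\<close>)
  have "cofinitary f" if f: "f \<in> adjoin G h" for f
  proof -
    obtain g0 s where "g0 \<in> G" "\<forall>p\<in>set s. snd p \<in> G" "reduced s" "f = eval_word h g0 s"
      using adjoin_reduced_rep[OF sub bij_h f] unfolding reduced_rep_def by blast
    then show ?thesis using reduced_word_cofinitary[OF cof sub] invariant by blast
  qed
  then show ?thesis unfolding cofinitary_group_def using adjoin_subgroup[OF sub bij_h] by blast
qed

theorem mainTheorem9:
  assumes "maximal_cofinitary_group G"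
  shows "finite (orbit G ` UNIV)"
proof (rule ccontr)
  assume "infinite (orbit G ` UNIV)"
  have G: "cofinitary_group G" and maximal: "\<And>H. cofinitary_group H \<Longrightarrow> G \<subseteq> H \<Longrightarrow> H = G"
    using assms unfolding maximal_cofinitary_group_def by blast+
  then have "subgroup_SymN G" unfolding cofinitary_group_def by blast
  then obtain c :: "nat \<Rightarrow> nat" where "surj c" and invariant: "\<And>g x. g \<in> G \<Longrightarrow> c (g x) = c x"
    using orbit_enumeration \<open>infinite (orbit G ` UNIV)\<close> by blast
  then obtain h where ladder: "ladder c h" using ladder_exists by blast
  have "cofinitary_group (adjoin G h)"
    by (rule adjoin_cofinitary_group[OF G ladder]) (rule invariant)
  then have "adjoin G h = G" using maximal adjoin_generator by blast
  then have "h \<in> G" using adjoin_generator by blast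
  then show False using invariant ladder.level_change[OF ladder] by blast
qed

end
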